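(* Fix all data of the risk-averse multistage and two-stage capacity planning models described in the context except the risk parameters $\lambda=(\lambda_2,\ldots,\lambda_T)\in[0,1]^{T-1}$ (the confidence levels $\alpha_t\in(0,1)$ are fixed), and write $z^{MS}_R(\lambda)$ and $z^{TS}_R(\lambda)$ for the optimal values of the multistage model and the two-stage model, respectively. Then both $z^{MS}_R$ and $z^{TS}_R$ increase as $\lambda$ increases: if $\lambda_t\le\hat\lambda_t$ for all $t=2,\ldots,T$, then $z^{MS}_R(\lambda)\le z^{MS}_R(\hat\lambda)$ and $z^{TS}_R(\lambda)\le z^{TS}_R(\hat\lambda)$.
   Context: Setting. Fix integers $T\ge 2$ (periods), $M\ge1$ (facilities), $N\ge1$ (customer sites). For each period $t$: maintenance costs $f_{ti}\ge 0$ ($i\in[M]$), forming $\boldsymbol f_t\in\mathbb R^M$; operational costs $c_{tij}\ge0$, forming $\boldsymbol c_t\in\mathbb R^{MN}$; capacities $h_{ti}>0$. Vectors $\boldsymbol y\in\mathbb R^{MN}$ are indexed by pairs $(i,j)$. $\boldsymbol A_t\in\mathbb R^{N\times MN}$ is the matrix with $(\boldsymbol A_t\boldsymbol y)_j=\sum_{i=1}^M y_{ij}$ and $\boldsymbol B_t\in\mathbb R^{M\times MN}$ the matrix with $(\boldsymbol B_t\boldsymbol y)_i=\frac1{h_{ti}}\sum_{j=1}^N y_{ij}$. Scenario tree: a finite rooted tree with node set $\mathcal T$ and root $1$, all root-to-leaf paths having $T$ nodes; $\mathcal T_t$ is the set of nodes at depth $t$ ($\mathcal T_1=\{1\}$),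 $t_n$ the period of node $n$, $\mathcal L=\mathcal T_T$ the leaves, $a(n)$ the parent of $n\ne1$, $\mathcal C(n)$ the set of children of $n$, $\mathcal P(n)$ the set of nodes on the path from the root to $n$ (inclusive). Each node has a probability $p_n>0$ with $\sum_{n\in\mathcal T_t}p_n=1$ for each $t$ and $\sum_{m\in\mathcal C(n)}p_m=p_n$ for $n\notin\mathcal L$, and a demand vector $\boldsymbol d_n\in\mathbb R^N_{\ge0}$. Risk parameters $\lambda_t\in[0,1]$, $\alpha_t\in(0,1)$, $t=2,\ldots,T$. Define $\tilde{\boldsymbol f}_n=\boldsymbol f_{t_n}$ if $n=1$ and $(1-\lambda_{t_n})\boldsymbol f_{t_n}$ otherwise; $\tilde{\boldsymbol c}_n=\boldsymbol c_{t_n}$ if $n=1$ and $(1-\lambda_{t_n})\boldsymbol c_{t_n}$ otherwise; $\tilde\lambda_n=0$ if $n\in\mathcal L$ and $\lambda_{t_n+1}$ otherwise; $\tilde\alpha_n=0$ if $n=1$ and $\lambda_{t_n}/(1-\alpha_{t_n})$ otherwise. Multistage model: $z^{MS}_R=\min\sum_{n\in\mathcal T}p_n\big(\tilde{\boldsymbol f}_n^{\mathsf T}\sum_{m\in\mathcal P(n)}\boldsymbol x_m+\tilde{\boldsymbol c}_n^{\mathsf T}\boldsymbol y_n+\tilde\lambda_n\eta_n+\tilde\alpha_nu_n\big)$ over $\boldsymbol x_n\in\mathbb Z^M_+$, $\boldsymbol y_n\in\mathbb R^{MN}_+$ ($n\in\mathcal T$), $\eta_n\in\mathbb R$ ($n\notin\mathcal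 L$), $u_n\ge0$ ($n\ne1$) (terms with $\eta_n$ for leaves and $u_1$ are absent), subject to $\boldsymbol A_{t_n}\boldsymbol y_n=\boldsymbol d_n$ and $\boldsymbol B_{t_n}\boldsymbol y_n\le\sum_{m\in\mathcal P(n)}\boldsymbol x_m$ for all $n\in\mathcal T$, and $u_n+\eta_{a(n)}\ge\boldsymbol f_{t_n}^{\mathsf T}\sum_{m\in\mathcal P(n)}\boldsymbol x_m+\boldsymbol c_{t_n}^{\mathsf T}\boldsymbol y_n$ for all $n\ne1$. Two-stage model: same as the multistage model with the additional constraints $\boldsymbol x_m=\boldsymbol x_n$ for all $m,n\in\mathcal T_t$, $t=1,\ldots,T$; its optimal value is $z^{TS}_R$. *)

theory Defs
  imports "HOL-Analysis.Analysis"
begin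

(* Facilities are indexed by {1..M}, sites by {1..N},
   periods by {1..T}. *)
record 'n cp_data =
  nT    :: nat                          (* T: number of periods *)
  nM    :: nat                          (* M: number of facilities *)
  nN    :: nat                          (* N: number of customer sites *)
  fc    :: "nat \<Rightarrow> nat \<Rightarrow> real"
  cc    :: "nat \<Rightarrow> nat \<Rightarrow> nat \<Rightarrow> real"
  hc    :: "nat \<Rightarrow> nat \<Rightarrow> real"
  nodes :: "'n set"
  root  :: "'n"
  par   :: "'n \<Rightarrow> 'n"
  per   :: "'n \<Rightarrow> nat"
  prob  :: "'n \<Rightarrow> real"
  dem   :: "'n \<Rightarrow> nat \<Rightarrow> real"
  alph  :: "nat \<Rightarrow> real"

definition children :: "'n cp_data \<Rightarrow> 'n \<Rightarrow> 'n set" where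
  "children D n = {m \<in> nodes D. m \<noteq> root D \<and> par D m = n}"

definition path_nodes :: "'n cp_data \<Rightarrow> 'n \<Rightarrow> 'n set" where
  "path_nodes D n = {(par D ^^ k) n | k. k < per D n}"

definition is_leaf :: "'n cp_data \<Rightarrow> 'n \<Rightarrow> bool" where
  "is_leaf D n \<longleftrightarrow> per D n = nT D"

definition valid_data :: "'n cp_data \<Rightarrow> bool" where
  "valid_data D \<longleftrightarrow>
     nT D \<ge> 2 \<and> nM D \<ge> 1 \<and> nN D \<ge> 1 \<and>
     (\<forall>t\<in>{1..nT D}. \<forall>i\<in>{1..nM D}. fc D t i \<ge> 0 \<and> hc D t i > 0) \<and>
     (\<forall>t\<in>{1..nT D}. \<forall>i\<in>{1..nM D}. \<forall>j\<in>{1..nN D}. cc D t i j \<ge> 0) \<and>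
     \<comment> \<open>scenario tree: rooted, every root-to-leaf path has T nodes\<close>
     finite (nodes D) \<and> root D \<in> nodes D \<and> per D (root D) = 1 \<and>
     (\<forall>n\<in>nodes D. 1 \<le> per D n \<and> per D n \<le> nT D) \<and>
     (\<forall>n\<in>nodes D - {root D}. par D n \<in> nodes D \<and> per D n = per D (par D n) + 1) \<and>
     (\<forall>n\<in>nodes D. per D n < nT D \<longrightarrow> children D n \<noteq> {}) \<and>
     \<comment> \<open>probabilities\<close>
     (\<forall>n\<in>nodes D. prob D n > 0) \<and>
     (\<forall>t\<in>{1..nT D}. (\<Sum>n\<in>{n\<in>nodes D. per D n = t}. prob D n) = 1) \<and>
     (\<forall>n\<in>nodes D. \<not> is_leaf D n \<longrightarrow> (\<Sum>m\<in>children D n. prob D m) = prob D n) \<and>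
     \<comment> \<open>demands\<close>
     (\<forall>n\<in>nodes D. \<forall>j\<in>{1..nN D}. dem D n j \<ge> 0) \<and>
     \<comment> \<open>confidence levels\<close>
     (\<forall>t\<in>{2..nT D}. 0 < alph D t \<and> alph D t < 1)"

definition valid_lambda :: "'n cp_data \<Rightarrow> (nat \<Rightarrow> real) \<Rightarrow> bool" where
  "valid_lambda D lam \<longleftrightarrow> (\<forall>t\<in>{2..nT D}. 0 \<le> lam t \<and> lam t \<le> 1)"

definition cap :: "'n cp_data \<Rightarrow> ('n \<Rightarrow> nat \<Rightarrow> nat) \<Rightarrow> 'n \<Rightarrow> nat \<Rightarrow> real" where
  "cap D x n i = (\<Sum>m\<in>path_nodes D n. real (x m i))"

definition f_tilde :: "'n cp_data \<Rightarrow> (nat \<Rightarrow> real) \<Rightarrow> 'n \<Rightarrow> nat \<Rightarrow> real" where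
  "f_tilde D lam n i =
     (if n = root D then fc D (per D n) i else (1 - lam (per D n)) * fc D (per D n) i)"

definition c_tilde :: "'n cp_data \<Rightarrow> (nat \<Rightarrow> real) \<Rightarrow> 'n \<Rightarrow> nat \<Rightarrow> nat \<Rightarrow> real" where
  "c_tilde D lam n i j =
     (if n = root D then cc D (per D n) i j else (1 - lam (per D n)) * cc D (per D n) i j)"

definition lambda_tilde :: "'n cp_data \<Rightarrow> (nat \<Rightarrow> real) \<Rightarrow> 'n \<Rightarrow> real" where
  "lambda_tilde D lam n = (if is_leaf D n then 0 else lam (per D n + 1))"

definition alpha_tilde :: "'n cp_data \<Rightarrow> (nat \<Rightarrow> real) \<Rightarrow> 'n \<Rightarrow> real" where
  "alpha_tilde D lam n =
     (if n = root D then 0 else lam (per D n) / (1 - alph D (per D n)))"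

definition objective ::
  "'n cp_data \<Rightarrow> (nat \<Rightarrow> real) \<Rightarrow> ('n \<Rightarrow> nat \<Rightarrow> nat) \<Rightarrow> ('n \<Rightarrow> nat \<Rightarrow> nat \<Rightarrow> real)
     \<Rightarrow> ('n \<Rightarrow> real) \<Rightarrow> ('n \<Rightarrow> real) \<Rightarrow> real" where
  "objective D lam x y eta u =
     (\<Sum>n\<in>nodes D. prob D n *
        ((\<Sum>i=1..nM D. f_tilde D lam n i * cap D x n i)
         + (\<Sum>i=1..nM D. \<Sum>j=1..nN D. c_tilde D lam n i j * y n i j)
         + lambda_tilde D lam n * eta n
         + alpha_tilde D lam n * u n))"

(* constraints of the multistage model; x_n \<in> Z^M_+ is encoded with nat values;
   eta_n for leaves and u_1 do not appear in the objective (their coefficients are 0)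
   nor in the constraints. *)
definition ms_feasible ::
  "'n cp_data \<Rightarrow> ('n \<Rightarrow> nat \<Rightarrow> nat) \<Rightarrow> ('n \<Rightarrow> nat \<Rightarrow> nat \<Rightarrow> real)
     \<Rightarrow> ('n \<Rightarrow> real) \<Rightarrow> ('n \<Rightarrow> real) \<Rightarrow> bool" where
  "ms_feasible D x y eta u \<longleftrightarrow>
     (\<forall>n\<in>nodes D. \<forall>i\<in>{1..nM D}. \<forall>j\<in>{1..nN D}. y n i j \<ge> 0) \<and>
     (\<forall>n\<in>nodes D - {root D}. u n \<ge> 0) \<and>
     (\<forall>n\<in>nodes D. \<forall>j\<in>{1..nN D}. (\<Sum>i=1..nM D. y n i j) = dem D n j) \<and>
     (\<forall>n\<in>nodes D. \<forall>i\<in>{1..nM D}.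
        (1 / hc D (per D n) i) * (\<Sum>j=1..nN D. y n i j) \<le> cap D x n i) \<and>
     (\<forall>n\<in>nodes D - {root D}.
        u n + eta (par D n) \<ge>
          (\<Sum>i=1..nM D. fc D (per D n) i * cap D x n i)
          + (\<Sum>i=1..nM D. \<Sum>j=1..nN D. cc D (per D n) i j * y n i j))"

definition ts_feasible ::
  "'n cp_data \<Rightarrow> ('n \<Rightarrow> nat \<Rightarrow> nat) \<Rightarrow> ('n \<Rightarrow> nat \<Rightarrow> nat \<Rightarrow> real)
     \<Rightarrow> ('n \<Rightarrow> real) \<Rightarrow> ('n \<Rightarrow> real) \<Rightarrow> bool" where
  "ts_feasible D x y eta u \<longleftrightarrow>
     ms_feasible D x y eta u \<and>
     (\<forall>m\<in>nodes D. \<forall>n\<in>nodes D. per D m = per D n \<longrightarrow>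
        (\<forall>i\<in>{1..nM D}. x m i = x n i))"

definition z_MS :: "'n cp_data \<Rightarrow> (nat \<Rightarrow> real) \<Rightarrow> real" where
  "z_MS D lam = Inf {objective D lam x y eta u | x y eta u. ms_feasible D x y eta u}"

definition z_TS :: "'n cp_data \<Rightarrow> (nat \<Rightarrow> real) \<Rightarrow> real" where
  "z_TS D lam = Inf {objective D lam x y eta u | x y eta u. ts_feasible D x y eta u}"

end

theory Submission
  imports Defs
begin

(* Write L n for the undiscounted cost of node n (the right-hand side of the CVaR
   constraint).  Regrouping the eta-terms of each node with its children, the objective
   becomes  sum_n p_n L n + sum_{m <> root} p_m lam_{t_m} (u_m / (1 - alpha_{t_m}) - L m + eta_{a(m)}).
   Feasibility makes every bracket nonnegative, so the objective is nonnegative and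
   pointwise nondecreasing in lam on the common feasible set; hence so are both infima. *)

definition node_cost ::
  "'n cp_data \<Rightarrow> ('n \<Rightarrow> nat \<Rightarrow> nat) \<Rightarrow> ('n \<Rightarrow> nat \<Rightarrow> nat \<Rightarrow> real) \<Rightarrow> 'n \<Rightarrow> real" where
  "node_cost D x y n = (\<Sum>i=1..nM D. fc D (per D n) i * cap D x n i)
      + (\<Sum>i=1..nM D. \<Sum>j=1..nN D. cc D (per D n) i j * y n i j)"

lemma tilde_costs_eq_node_cost:
  "(\<Sum>i=1..nM D. f_tilde D lam n i * cap D x n i)
     + (\<Sum>i=1..nM D. \<Sum>j=1..nN D. c_tilde D lam n i j * y n i j)
   = (if n = root D then 1 else 1 - lam (per D n)) * node_cost D x y n"
  by (cases "n = root D")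
     (simp_all add: f_tilde_def c_tilde_def node_cost_def sum_distrib_left ring_distribs mult.assoc)

lemma valid_data_parent:
  assumes "valid_data D" "n \<in> nodes D" "n \<noteq> root D"
  shows "par D n \<in> nodes D" "per D n = per D (par D n) + 1"
  using assms unfolding valid_data_def by auto

lemma valid_data_nonroot_period:
  assumes "valid_data D" "n \<in> nodes D" "n \<noteq> root D"
  shows "per D n \<in> {2..nT D}"
  using assms valid_data_parent[OF assms] unfolding valid_data_def by force

lemma children_of_leaf:
  assumes "valid_data D" "is_leaf D n"
  shows "children D n = {}"
proof -
  have "per D m \<le> per D n" if "m \<in> nodes D" for m
    using that assms unfolding valid_data_def is_leaf_def by auto
  then show ?thesis
    using valid_data_parent[OF assms(1)] unfolding children_def by fastforce
qed

lemma sum_children_over_nodes: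
  assumes "valid_data D"
  shows "(\<Sum>n\<in>nodes D. \<Sum>m\<in>children D n. g m) = (\<Sum>m\<in>nodes D - {root D}. g m)"
proof -
  have "children D n = {m \<in> nodes D - {root D}. par D m = n}" for n
    unfolding children_def by auto
  moreover have "finite (nodes D)" using assms unfolding valid_data_def by simp
  ultimately show ?thesis
    by (simp only:) (rule sum.group, use valid_data_parent[OF assms] in auto)
qed

text \<open>The eta-term of a non-leaf node splits over its children, since their probabilities
  add up to its own and they all lie in the next period.\<close>

lemma lambda_tilde_eta_eq_children_sum:
  assumes "valid_data D" "n \<in> nodes D"
  shows "prob D n * lambda_tilde D lam n * eta n
       = (\<Sum>m\<in>children D n. prob D m * lam (per D m) * eta (par D m))"
proof (cases "is_leaf D n")
  case True
  then show ?thesis by (simp add: lambda_tilde_def children_of_leaf[OF assms(1)])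
next
  case False
  have "(\<Sum>m\<in>children D n. prob D m * lam (per D m) * eta (par D m))
      = (\<Sum>m\<in>children D n. prob D m) * (lam (per D n + 1) * eta n)"
    unfolding sum_distrib_right
    by (rule sum.cong) (auto simp: children_def valid_data_parent[OF assms(1)])
  also have "\<dots> = prob D n * (lam (per D n + 1) * eta n)"
    using assms False unfolding valid_data_def by simp
  finally show ?thesis using False by (simp add: lambda_tilde_def)
qed

lemma sum_lambda_tilde_eta:
  assumes "valid_data D"
  shows "(\<Sum>n\<in>nodes D. prob D n * lambda_tilde D lam n * eta n)
       = (\<Sum>m\<in>nodes D - {root D}. prob D m * lam (per D m) * eta (par D m))"
  by (simp add: lambda_tilde_eta_eq_children_sum[OF assms] sum_children_over_nodes[OF assms])

lemma sum_if_eq_zero: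
  assumes "finite A"
  shows "(\<Sum>x\<in>A. if x = a then 0 else g x) = (\<Sum>x\<in>A - {a}. g x)"
  using assms by (simp add: sum.If_cases Diff_eq)

lemma objective_eq_node_cost_plus_excess:
  assumes vd: "valid_data D"
  shows "objective D lam x y eta u =
     (\<Sum>n\<in>nodes D. prob D n * node_cost D x y n)
     + (\<Sum>m\<in>nodes D - {root D}. prob D m * lam (per D m) *
          (u m / (1 - alph D (per D m)) - node_cost D x y m + eta (par D m)))"
proof -
  let ?L = "node_cost D x y"
  have "objective D lam x y eta u =
      (\<Sum>n\<in>nodes D. prob D n * ?L n
         - (if n = root D then 0 else prob D n * lam (per D n) * ?L n)
       + prob D n * lambda_tilde D lam n * eta n
       + (if n = root D then 0
          else prob D n * lam (per D n) * (u n / (1 - alph D (per D n)))))"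
    unfolding objective_def tilde_costs_eq_node_cost
    by (rule sum.cong) (simp_all add: alpha_tilde_def algebra_simps)
  also have "\<dots> = (\<Sum>n\<in>nodes D. prob D n * ?L n)
      - (\<Sum>m\<in>nodes D - {root D}. prob D m * lam (per D m) * ?L m)
      + (\<Sum>m\<in>nodes D - {root D}. prob D m * lam (per D m) * eta (par D m))
      + (\<Sum>m\<in>nodes D - {root D}. prob D m * lam (per D m) * (u m / (1 - alph D (per D m))))"
    using vd unfolding valid_data_def
    by (simp only: sum.distrib sum_subtractf sum_if_eq_zero sum_lambda_tilde_eta[OF vd])
  finally show ?thesis
    by (simp add: algebra_simps sum.distrib sum_subtractf)
qed

lemma cvar_excess_nonneg:
  fixes u L e a :: real
  assumes "0 \<le> u" "L \<le> u + e" "0 \<le> a" "a < 1"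
  shows "0 \<le> u / (1 - a) - L + e"
proof -
  have "u \<le> u / (1 - a)"
    using assms by (simp add: le_divide_eq mult_left_le)
  then show ?thesis using assms(2) by linarith
qed

lemma ms_feasible_excess_nonneg:
  assumes vd: "valid_data D" and fe: "ms_feasible D x y eta u"
    and m: "m \<in> nodes D" "m \<noteq> root D"
  shows "0 \<le> u m / (1 - alph D (per D m)) - node_cost D x y m + eta (par D m)"
proof (rule cvar_excess_nonneg)
  show "0 \<le> u m" "node_cost D x y m \<le> u m + eta (par D m)"
    using fe m unfolding ms_feasible_def node_cost_def by auto
  have "0 < alph D (per D m) \<and> alph D (per D m) < 1"
    using vd valid_data_nonroot_period[OF vd m] unfolding valid_data_def by blast
  then show "0 \<le> alph D (per D m)" "alph D (per D m) < 1" by auto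
qed

lemma ms_feasible_node_cost_nonneg:
  assumes vd: "valid_data D" and fe: "ms_feasible D x y eta u" and n: "n \<in> nodes D"
  shows "0 \<le> node_cost D x y n"
proof -
  have "per D n \<in> {1..nT D}" using vd n unfolding valid_data_def by auto
  then show ?thesis
    using vd fe n unfolding node_cost_def valid_data_def ms_feasible_def cap_def
    by (intro add_nonneg_nonneg sum_nonneg mult_nonneg_nonneg) auto
qed

lemma objective_nonneg:
  assumes vd: "valid_data D" and fe: "ms_feasible D x y eta u" and vl: "valid_lambda D lam"
  shows "0 \<le> objective D lam x y eta u"
proof -
  have prob: "0 \<le> prob D n" if "n \<in> nodes D" for n
    using vd that unfolding valid_data_def by (auto intro: less_imp_le)
  have "0 \<le> (\<Sum>n\<in>nodes D. prob D n * node_cost D x y n)"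
    by (rule sum_nonneg) (simp add: prob ms_feasible_node_cost_nonneg[OF vd fe])
  moreover have "0 \<le> (\<Sum>m\<in>nodes D - {root D}. prob D m * lam (per D m) *
          (u m / (1 - alph D (per D m)) - node_cost D x y m + eta (par D m)))"
  proof (rule sum_nonneg)
    fix m assume m: "m \<in> nodes D - {root D}"
    have "0 \<le> lam (per D m)"
      using vl valid_data_nonroot_period[OF vd] m unfolding valid_lambda_def by blast
    with m show "0 \<le> prob D m * lam (per D m) *
          (u m / (1 - alph D (per D m)) - node_cost D x y m + eta (par D m))"
      by (intro mult_nonneg_nonneg) (simp_all add: prob ms_feasible_excess_nonneg[OF vd fe])
  qed
  ultimately show ?thesis
    unfolding objective_eq_node_cost_plus_excess[OF vd] by (rule add_nonneg_nonneg)
qed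

lemma objective_mono_lambda:
  assumes vd: "valid_data D" and fe: "ms_feasible D x y eta u"
    and le: "\<forall>t\<in>{2..nT D}. lam t \<le> lam' t"
  shows "objective D lam x y eta u \<le> objective D lam' x y eta u"
  unfolding objective_eq_node_cost_plus_excess[OF vd]
proof (intro add_left_mono sum_mono mult_right_mono)
  fix m assume m: "m \<in> nodes D - {root D}"
  have "0 < prob D m" using vd m unfolding valid_data_def by blast
  moreover have "lam (per D m) \<le> lam' (per D m)"
    using le valid_data_nonroot_period[OF vd] m by blast
  ultimately show "prob D m * lam (per D m) \<le> prob D m * lam' (per D m)" by simp
  show "0 \<le> u m / (1 - alph D (per D m)) - node_cost D x y m + eta (par D m)"
    using m by (simp add: ms_feasible_excess_nonneg[OF vd fe])
qed

lemma Inf_setcompr_mono: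
  fixes g h :: "'a \<Rightarrow> 'b \<Rightarrow> 'c \<Rightarrow> 'd \<Rightarrow> real"
  assumes "\<And>x y e u. P x y e u \<Longrightarrow> b \<le> g x y e u"
    and "\<And>x y e u. P x y e u \<Longrightarrow> g x y e u \<le> h x y e u"
  shows "Inf {g x y e u | x y e u. P x y e u} \<le> Inf {h x y e u | x y e u. P x y e u}"
proof (cases "\<exists>x y e u. P x y e u")
  case True
  show ?thesis
  proof (rule cInf_mono)
    show "bdd_below {g x y e u | x y e u. P x y e u}"
      using assms(1) by (intro bdd_belowI[of _ b]) auto
  qed (use True assms(2) in fastforce)+
qed simp

theorem proposition1:
  fixes D :: "'n cp_data" and lam lam' :: "nat \<Rightarrow> real"
  assumes "valid_data D"
    and "valid_lambda D lam" and "valid_lambda D lam'"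
    and "\<forall>t\<in>{2..nT D}. lam t \<le> lam' t"
  shows "z_MS D lam \<le> z_MS D lam' \<and> z_TS D lam \<le> z_TS D lam'"
proof
  show "z_MS D lam \<le> z_MS D lam'"
    unfolding z_MS_def
    by (rule Inf_setcompr_mono[where b = 0])
       (simp_all add: assms objective_nonneg objective_mono_lambda)
  show "z_TS D lam \<le> z_TS D lam'"
    unfolding z_TS_def ts_feasible_def
    by (rule Inf_setcompr_mono[where b = 0])
       (simp_all add: assms objective_nonneg objective_mono_lambda)
qed

end
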